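(* Let $n \geq 3$, let $C_n$ be the cycle on $n$ vertices, and let $G$ be a $k$-fold cover of $C_n$. Then $\gamma(G) \geq \frac{2}{3}\,k\,\gamma(C_n)$.
   Context: All graphs are finite, simple and undirected. A graph $G$ is a cover of a graph $F$ if there is an onto map $\pi: V(G)\to V(F)$ such that for every vertex $v$ of $G$, $\pi$ maps the neighbours of $v$ in $G$ bijectively onto the neighbours of $\pi(v)$ in $F$; the cover is $k$-fold if every fibre $\pi^{-1}(u)$ has exactly $k$ vertices. $\gamma(\cdot)$ denotes the domination number: the minimum size of a set $S$ of vertices such that every vertex not in $S$ has a neighbour in $S$. *)

theory Defs
  imports Complex_Main
begin

definition simple_graph :: "'a set \<Rightarrow> ('a \<Rightarrow> 'a \<Rightarrow> bool) \<Rightarrow> bool" where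
  "simple_graph V E \<longleftrightarrow> finite V \<and> (\<forall>u v. E u v \<longrightarrow> u \<in> V \<and> v \<in> V)
     \<and> (\<forall>u v. E u v \<longrightarrow> E v u) \<and> (\<forall>v. \<not> E v v)"

definition nbhd :: "'a set \<Rightarrow> ('a \<Rightarrow> 'a \<Rightarrow> bool) \<Rightarrow> 'a \<Rightarrow> 'a set" where
  "nbhd V E v = {u \<in> V. E v u}"

definition dominating_set :: "'a set \<Rightarrow> ('a \<Rightarrow> 'a \<Rightarrow> bool) \<Rightarrow> 'a set \<Rightarrow> bool" where
  "dominating_set V E S \<longleftrightarrow> S \<subseteq> V \<and> (\<forall>v \<in> V - S. \<exists>u \<in> S. E v u)"

definition domination_number :: "'a set \<Rightarrow> ('a \<Rightarrow> 'a \<Rightarrow> bool) \<Rightarrow> nat" where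
  "domination_number V E = Min {card S | S. dominating_set V E S}"

definition cycle_adj :: "nat \<Rightarrow> nat \<Rightarrow> nat \<Rightarrow> bool" where
  "cycle_adj n i j \<longleftrightarrow> i < n \<and> j < n \<and> (j = (i + 1) mod n \<or> i = (j + 1) mod n) \<and> i \<noteq> j"

definition is_cover :: "'a set \<Rightarrow> ('a \<Rightarrow> 'a \<Rightarrow> bool) \<Rightarrow> 'b set \<Rightarrow> ('b \<Rightarrow> 'b \<Rightarrow> bool)
    \<Rightarrow> ('a \<Rightarrow> 'b) \<Rightarrow> bool" where
  "is_cover V E W F \<pi> \<longleftrightarrow> \<pi> ` V = W \<and>
     (\<forall>v \<in> V. bij_betw \<pi> (nbhd V E v) (nbhd W F (\<pi> v)))"

definition is_k_fold_cover :: "nat \<Rightarrow> 'a set \<Rightarrow> ('a \<Rightarrow> 'a \<Rightarrow> bool) \<Rightarrow> 'b set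
    \<Rightarrow> ('b \<Rightarrow> 'b \<Rightarrow> bool) \<Rightarrow> ('a \<Rightarrow> 'b) \<Rightarrow> bool" where
  "is_k_fold_cover k V E W F \<pi> \<longleftrightarrow> is_cover V E W F \<pi> \<and>
     (\<forall>u \<in> W. card {v \<in> V. \<pi> v = u} = k)"

end

theory Submission
  imports Defs
begin

text \<open>Covering maps preserve degrees, so every vertex of a cover of \<open>C\<^sub>n\<close> has degree 2 and a
  dominating set \<open>S\<close> dominates at most \<open>3 |S|\<close> of the \<open>k n\<close> vertices; hence
  \<open>\<gamma>(G) \<ge> k n / 3\<close>. Conversely the multiples of 3 dominate \<open>C\<^sub>n\<close>, so
  \<open>\<gamma>(C\<^sub>n) \<le> \<lceil>n/3\<rceil> \<le> n/2\<close> once \<open>n \<ge> 3\<close>.\<close>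

lemma finite_dominating_set_cards:
  assumes "finite V"
  shows "finite {card S | S. dominating_set V E S}"
proof (rule finite_subset)
  show "{card S | S. dominating_set V E S} \<subseteq> {..card V}"
    using assms by (auto simp: dominating_set_def intro: card_mono)
qed simp

lemma domination_number_le:
  assumes "finite V" "dominating_set V E S"
  shows "domination_number V E \<le> card S"
  unfolding domination_number_def
  using finite_dominating_set_cards[OF assms(1)] assms(2) by (intro Min_le) auto

lemma ex_dominating_set_card_domination_number:
  assumes "finite V"
  obtains S where "dominating_set V E S" "card S = domination_number V E"
proof -
  have "dominating_set V E V" by (simp add: dominating_set_def)
  then have "domination_number V E \<in> {card S | S. dominating_set V E S}"
    unfolding domination_number_def
    using finite_dominating_set_cards[OF assms] by (intro Min_in) auto
  then show thesis using that by auto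
qed

lemma card_le_dominating_set_mult:
  assumes "finite V" and sym: "\<And>u v. E u v \<Longrightarrow> E v u" and dom: "dominating_set V E S"
    and deg: "\<And>s. s \<in> S \<Longrightarrow> card (nbhd V E s) \<le> d"
  shows "card V \<le> (d + 1) * card S"
proof -
  have "S \<subseteq> V" using dom by (simp add: dominating_set_def)
  then have "finite S" using assms(1) finite_subset by blast
  have "V \<subseteq> S \<union> (\<Union>s\<in>S. nbhd V E s)"
  proof
    fix v assume "v \<in> V"
    show "v \<in> S \<union> (\<Union>s\<in>S. nbhd V E s)"
    proof (cases "v \<in> S")
      case False
      then obtain s where "s \<in> S" "E v s" using dom \<open>v \<in> V\<close> by (auto simp: dominating_set_def)
      then show ?thesis using sym \<open>v \<in> V\<close> by (auto simp: nbhd_def)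
    qed simp
  qed
  then have "card V \<le> card (S \<union> (\<Union>s\<in>S. nbhd V E s))"
    using \<open>finite S\<close> assms(1) by (intro card_mono) (auto simp: nbhd_def)
  also have "\<dots> \<le> card S + card (\<Union>s\<in>S. nbhd V E s)"
    by (rule card_Un_le)
  also have "\<dots> \<le> card S + (\<Sum>s\<in>S. card (nbhd V E s))"
    using card_UN_le[OF \<open>finite S\<close>] by simp
  also have "\<dots> \<le> card S + (\<Sum>s\<in>S. d)"
    using deg by (intro add_left_mono sum_mono) auto
  finally show ?thesis by (simp add: algebra_simps)
qed

lemma card_le_domination_number_mult:
  assumes "simple_graph V E" and deg: "\<And>v. v \<in> V \<Longrightarrow> card (nbhd V E v) \<le> d"
  shows "card V \<le> (d + 1) * domination_number V E"
proof -
  have "finite V" and sym: "\<And>u v. E u v \<Longrightarrow> E v u"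
    using assms(1) by (auto simp: simple_graph_def)
  obtain S where S: "dominating_set V E S" "card S = domination_number V E"
    using ex_dominating_set_card_domination_number[OF \<open>finite V\<close>] .
  have "S \<subseteq> V" using S(1) by (simp add: dominating_set_def)
  then have "card V \<le> (d + 1) * card S"
    using deg by (intro card_le_dominating_set_mult[OF \<open>finite V\<close> sym S(1)]) auto
  then show ?thesis using S(2) by simp
qed

lemma card_nbhd_cover:
  assumes "is_cover V E W F \<pi>" "v \<in> V"
  shows "card (nbhd V E v) = card (nbhd W F (\<pi> v))"
  using assms unfolding is_cover_def by (blast intro: bij_betw_same_card)

lemma card_k_fold_cover:
  assumes "finite V" "is_k_fold_cover k V E W F \<pi>"
  shows "card V = k * card W"
proof -
  have img: "\<pi> ` V = W" and fibre: "\<And>w. w \<in> W \<Longrightarrow> card {v \<in> V. \<pi> v = w} = k"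
    using assms(2) by (auto simp: is_k_fold_cover_def is_cover_def)
  have "finite W" using img assms(1) by blast
  have "V = (\<Union>w\<in>W. {v \<in> V. \<pi> v = w})" using img by auto
  then have "card V = card (\<Union>w\<in>W. {v \<in> V. \<pi> v = w})" by (rule arg_cong)
  also have "\<dots> = (\<Sum>w\<in>W. card {v \<in> V. \<pi> v = w})"
    using assms(1) \<open>finite W\<close> by (intro card_UN_disjoint) auto
  also have "\<dots> = k * card W" using fibre by simp
  finally show ?thesis .
qed

lemma nbhd_cycle_subset:
  assumes "i < n"
  shows "nbhd {0..<n} (cycle_adj n) i \<subseteq> {(i + 1) mod n, (i + n - 1) mod n}"
proof
  fix j assume "j \<in> nbhd {0..<n} (cycle_adj n) i"
  then have j: "j < n" "j = (i + 1) mod n \<or> i = (j + 1) mod n"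
    by (auto simp: nbhd_def cycle_adj_def)
  show "j \<in> {(i + 1) mod n, (i + n - 1) mod n}"
  proof (cases "j = (i + 1) mod n")
    case False
    then have ij: "i = (j + 1) mod n" using j by auto
    show ?thesis
    proof (cases "j + 1 < n")
      case True
      then show ?thesis using ij j by simp
    next
      case False
      then have "j = n - 1" using j by simp
      then have "i = 0" using ij j by simp
      then show ?thesis using \<open>j = n - 1\<close> j by simp
    qed
  qed simp
qed

lemma card_nbhd_cycle_le:
  assumes "i < n"
  shows "card (nbhd {0..<n} (cycle_adj n) i) \<le> 2"
proof -
  have "card (nbhd {0..<n} (cycle_adj n) i) \<le> card {(i + 1) mod n, (i + n - 1) mod n}"
    using nbhd_cycle_subset[OF assms] by (intro card_mono) auto
  also have "\<dots> \<le> 2" by (simp add: card_insert_le_m1)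
  finally show ?thesis .
qed

lemma cycle_adj_commute: "cycle_adj n i j \<longleftrightarrow> cycle_adj n j i"
  unfolding cycle_adj_def by auto

lemma cycle_adj_succ:
  assumes "1 < n" "i < n"
  shows "cycle_adj n i ((i + 1) mod n)"
proof (cases "i + 1 < n")
  case False
  then have "i + 1 = n" "0 < i" using assms by auto
  then show ?thesis unfolding cycle_adj_def by auto
qed (simp add: cycle_adj_def)

lemma dominating_set_cycle_multiples_of_3:
  "dominating_set {0..<n} (cycle_adj n) {i. i < n \<and> i mod 3 = 0}"
  unfolding dominating_set_def
proof (intro conjI ballI)
  fix v assume "v \<in> {0..<n} - {i. i < n \<and> i mod 3 = 0}"
  then have v: "v < n" "v mod 3 \<noteq> 0" by auto
  then have "1 < n" by (cases v) auto
  show "\<exists>u\<in>{i. i < n \<and> i mod 3 = 0}. cycle_adj n v u"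
  proof (cases "v mod 3 = 1")
    case True
    then have "(v - 1) mod 3 = 0" "v - 1 + 1 = v" by presburger+
    then have "cycle_adj n (v - 1) v"
      using cycle_adj_succ[OF \<open>1 < n\<close>, of "v - 1"] v(1) by simp
    then show ?thesis
      using \<open>(v - 1) mod 3 = 0\<close> v(1) cycle_adj_commute by fastforce
  next
    case False
    then have "(v + 1) mod 3 = 0" using v(2) by presburger
    moreover have "(v + 1) mod n = v + 1 \<or> (v + 1) mod n = 0"
      using v(1) by (metis Suc_eq_plus1 Suc_lessI mod_less mod_self)
    ultimately have "(v + 1) mod n mod 3 = 0" by auto
    moreover have "(v + 1) mod n < n" using \<open>1 < n\<close> by simp
    ultimately show ?thesis
      using cycle_adj_succ[OF \<open>1 < n\<close> v(1)] by (intro bexI[of _ "(v + 1) mod n"]) simp_all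
  qed
qed auto

lemma card_multiples_of_3_less:
  "card {i::nat. i < n \<and> i mod 3 = 0} = (n + 2) div 3"
proof -
  have "{i::nat. i < n \<and> i mod 3 = 0} = (\<lambda>j. 3 * j) ` {..<(n + 2) div 3}"
  proof (intro set_eqI iffI)
    fix x assume "x \<in> {i::nat. i < n \<and> i mod 3 = 0}"
    then have "x = 3 * (x div 3)" "x div 3 < (n + 2) div 3" by auto
    then show "x \<in> (\<lambda>j. 3 * j) ` {..<(n + 2) div 3}" by blast
  qed auto
  moreover have "inj_on (\<lambda>j::nat. 3 * j) {..<(n + 2) div 3}" by (auto simp: inj_on_def)
  ultimately show ?thesis by (simp add: card_image)
qed

lemma domination_number_cycle_le:
  "domination_number {0..<n} (cycle_adj n) \<le> (n + 2) div 3"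
  using domination_number_le[OF _ dominating_set_cycle_multiples_of_3]
  by (simp add: card_multiples_of_3_less)

theorem corollary2p5:
  fixes n k :: nat and V :: "'a set" and E :: "'a \<Rightarrow> 'a \<Rightarrow> bool" and \<pi> :: "'a \<Rightarrow> nat"
  assumes "n \<ge> 3"
    and "simple_graph V E"
    and "is_k_fold_cover k V E {0..<n} (cycle_adj n) \<pi>"
  shows "real (domination_number V E)
           \<ge> 2 / 3 * real k * real (domination_number {0..<n} (cycle_adj n))"
proof -
  let ?\<gamma>G = "domination_number V E" and ?\<gamma>C = "domination_number {0..<n} (cycle_adj n)"
  have cover: "is_cover V E {0..<n} (cycle_adj n) \<pi>"
    using assms(3) by (simp add: is_k_fold_cover_def)
  have "finite V" using assms(2) by (simp add: simple_graph_def)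
  have deg: "card (nbhd V E v) \<le> 2" if "v \<in> V" for v
  proof -
    have "\<pi> v < n" using cover that by (auto simp: is_cover_def)
    then show ?thesis
      using card_nbhd_cover[OF cover that] card_nbhd_cycle_le[of "\<pi> v" n] by simp
  qed
  have "k * (2 * ?\<gamma>C) \<le> k * n"
    using domination_number_cycle_le[of n] assms(1) by (intro mult_le_mono2) linarith
  also have "\<dots> = card V"
    using card_k_fold_cover[OF \<open>finite V\<close> assms(3)] by simp
  also have "\<dots> \<le> 3 * ?\<gamma>G"
    using card_le_domination_number_mult[OF assms(2) deg] by simp
  finally have "real k * (2 * real ?\<gamma>C) \<le> 3 * real ?\<gamma>G"
    by (metis of_nat_le_iff of_nat_mult of_nat_numeral)
  then show ?thesis by linarith
qed

end
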